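(* Let $X$ and $X^n$, $n\ge1$, be stochastic processes with sample paths in $D_{\mathbb{R}}[0,1]$. Assume that each $X^n$ is constant on each of the intervals $[0,2^{-n}),[2^{-n},2\cdot2^{-n}),\dots,[(2^n-1)2^{-n},1)$ and that $$\max_{d\in\mathcal{D}_n}|X^n_d-X_d|\to0\quad\text{almost surely as }n\to\infty,$$ where $\mathcal{D}_n=\{0,2^{-n},\dots,(2^n-1)2^{-n},1\}$. Then $X^n\to X$ almost surely in Skorokhod's $J_1$ topology.
   Context: $D_{\mathbb{R}}[0,1]$ is the space of real-valued càdlàg functions on $[0,1]$. Skorokhod's $J_1$ topology is induced by $d_{J_1}(x,y)=\inf_{\lambda\in\Lambda}\big(\sup_{t\in[0,1]}|\lambda(t)-t|+\sup_{t\in[0,1]}|x(\lambda(t))-y(t)|\big)$, where $\Lambda$ is the set of all increasing homeomorphisms $\lambda:[0,1]\to[0,1]$. *)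

theory Defs
  imports "HOL-Probability.Probability"
begin

text \<open>Real-valued cadlag functions on [0,1]: right-continuous at every t in [0,1),
  left limits at every t in (0,1]. Values outside [0,1] are irrelevant.\<close>
definition cadlag :: "(real \<Rightarrow> real) \<Rightarrow> bool" where
  "cadlag x \<longleftrightarrow>
     (\<forall>t\<in>{0..<1}. (x \<longlongrightarrow> x t) (at_right t)) \<and>
     (\<forall>t\<in>{0<..1}. \<exists>l. (x \<longlongrightarrow> l) (at_left t))"

definition Lambda :: "(real \<Rightarrow> real) set" where
  "Lambda = {lam. mono_on {0..1} lam \<and> (\<exists>mu. homeomorphism {0..1} {0..1} lam mu)}"

definition dJ1 :: "(real \<Rightarrow> real) \<Rightarrow> (real \<Rightarrow> real) \<Rightarrow> real" where
  "dJ1 x y = (INF lam\<in>Lambda. (SUP t\<in>{0..1}. \<bar>lam t - t\<bar>) + (SUP t\<in>{0..1}. \<bar>x (lam t) - y t\<bar>))"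

definition dyadic :: "nat \<Rightarrow> real set" where
  "dyadic n = {real k / 2 ^ n | k. k \<le> 2 ^ n}"

end

theory Submission
  imports Defs
begin

text \<open>Fix \<open>\<epsilon> > 0\<close>. A cadlag path \<open>x\<close> admits a partition \<open>0 = t\<^sub>0 < \<dots> < t\<^sub>k = 1\<close> on
  whose cells \<open>[t\<^sub>i, t\<^sub>i\<^sub>+\<^sub>1)\<close> it oscillates by less than \<open>\<epsilon>\<close> (a supremum argument using right
  continuity and left limits). Once \<open>2\<^sup>-\<^sup>n\<close> is below every gap of the partition, round each
  \<open>t\<^sub>i\<close> up to the dyadic grid, giving \<open>\<tau>\<^sub>i\<close>, and let \<open>\<lambda>\<close> be the piecewise linear homeomorphism
  with \<open>\<lambda> t\<^sub>i = \<tau>\<^sub>i\<close>, so that \<open>|\<lambda> - id| \<le> 2\<^sup>-\<^sup>n\<close>. For \<open>s \<in> [t\<^sub>i, t\<^sub>i\<^sub>+\<^sub>1)\<close> the point \<open>\<lambda> s\<close> lies in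
  \<open>[\<tau>\<^sub>i, \<tau>\<^sub>i\<^sub>+\<^sub>1)\<close>, so the grid point \<open>d\<close> just below it still lies in \<open>[t\<^sub>i, t\<^sub>i\<^sub>+\<^sub>1)\<close>; as \<open>X\<^sup>n\<close> is
  constant between grid points, \<open>|X\<^sup>n (\<lambda> s) - X s| \<le> |X\<^sup>n d - X d| + 2\<epsilon>\<close>. This estimate holds
  pathwise, so almost sure convergence on the grid gives almost sure \<open>J\<^sub>1\<close> convergence.\<close>

lemma strict_chain_less:
  fixes t :: "nat \<Rightarrow> real"
  assumes "\<forall>i<k. t i < t (Suc i)" "i < j" "j \<le> k"
  shows "t i < t j"
  by (rule lift_Suc_mono_less_ivl[of "{..<k}"]) (use assms in auto)

lemma strict_chain_le:
  fixes t :: "nat \<Rightarrow> real"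
  assumes "\<forall>i<k. t i < t (Suc i)" "i \<le> j" "j \<le> k"
  shows "t i \<le> t j"
  using strict_chain_less[OF assms(1), of i j] assms(2,3) by (cases "i = j") auto

lemma strict_chain_locate:
  fixes t :: "nat \<Rightarrow> real"
  assumes "\<forall>i<k. t i < t (Suc i)" "t 0 \<le> u" "u < t k"
  shows "\<exists>i<k. t i \<le> u \<and> u < t (Suc i)"
  using assms
proof (induction k)
  case 0
  then show ?case by simp
next
  case (Suc k)
  show ?case
  proof (cases "u < t k")
    case True
    with Suc obtain i where "i < k" "t i \<le> u \<and> u < t (Suc i)" by auto
    then show ?thesis by (intro exI[of _ i]) auto
  next
    case False
    with Suc show ?thesis by (intro exI[of _ k]) auto
  qed
qed

section \<open>Partitions of small oscillation\<close>

definition small_osc_partition :: "(real \<Rightarrow> real) \<Rightarrow> real \<Rightarrow> nat \<Rightarrow> (nat \<Rightarrow> real) \<Rightarrow> bool" where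
  "small_osc_partition x e k t \<longleftrightarrow> t 0 = 0 \<and> (\<forall>i<k. t i < t (Suc i)) \<and>
     (\<forall>i<k. \<forall>u\<in>{t i..<t (Suc i)}. \<bar>x u - x (t i)\<bar> < e)"

lemma small_osc_partition_snoc:
  assumes "small_osc_partition x e k t" "t k < m" "\<forall>u\<in>{t k..<m}. \<bar>x u - x (t k)\<bar> < e"
  shows "small_osc_partition x e (Suc k) (t(Suc k := m))"
  using assms unfolding small_osc_partition_def by (auto simp: less_Suc_eq)

lemma small_osc_partition_extend_right:
  assumes "cadlag x" "e > 0" "small_osc_partition x e k t" "t k \<in> {0..<1}"
  shows "\<exists>m\<in>{t k<..1}. small_osc_partition x e (Suc k) (t(Suc k := m))"
proof -
  have "(x \<longlongrightarrow> x (t k)) (at_right (t k))"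
    using assms(1,4) unfolding cadlag_def by blast
  from tendstoD[OF this assms(2)] obtain b where b: "t k < b"
      "\<And>u. t k < u \<Longrightarrow> u < b \<Longrightarrow> \<bar>x u - x (t k)\<bar> < e"
    unfolding eventually_at_right_field dist_real_def by auto
  define m where "m = min b 1"
  have "\<forall>u\<in>{t k..<m}. \<bar>x u - x (t k)\<bar> < e"
    using b assms(2) by (force simp: m_def le_less)
  moreover have "m \<in> {t k<..1}"
    using b assms(4) by (simp add: m_def)
  ultimately show ?thesis
    using small_osc_partition_snoc[OF assms(3), of m] by auto
qed

lemma small_osc_partition_extend_left:
  assumes "cadlag x" "e > 0" "m \<in> {0<..1}"
  obtains b where "b < m"
    "\<And>k t. small_osc_partition x e k t \<Longrightarrow> t k \<in> {b<..<m} \<Longrightarrow>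
       small_osc_partition x e (Suc k) (t(Suc k := m))"
proof -
  obtain l where "(x \<longlongrightarrow> l) (at_left m)"
    using assms(1,3) unfolding cadlag_def by blast
  from tendstoD[OF this, of "e/2"] assms(2) obtain b where b: "b < m"
      "\<And>u. b < u \<Longrightarrow> u < m \<Longrightarrow> \<bar>x u - l\<bar> < e/2"
    unfolding eventually_at_left_field dist_real_def by auto
  show ?thesis
  proof (rule that[OF b(1)])
    fix k t assume kt: "small_osc_partition x e k t" "t k \<in> {b<..<m}"
    have "\<forall>u\<in>{t k..<m}. \<bar>x u - x (t k)\<bar> < e"
    proof
      fix u assume "u \<in> {t k..<m}"
      then have "\<bar>x u - l\<bar> < e/2" "\<bar>x (t k) - l\<bar> < e/2"
        using b(2) kt(2) by auto
      then show "\<bar>x u - x (t k)\<bar> < e" by linarith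
    qed
    then show "small_osc_partition x e (Suc k) (t(Suc k := m))"
      using small_osc_partition_snoc[OF kt(1)] kt(2) by simp
  qed
qed

lemma small_osc_partition_exists:
  assumes "cadlag x" "e > 0"
  obtains k t where "small_osc_partition x e k t" "t k = 1"
proof -
  define S where "S = {s\<in>{0..1}. \<exists>k t. small_osc_partition x e k t \<and> t k = s}"
  have S_intro: "s \<in> S" if "s \<in> {0..1}" "small_osc_partition x e k t" "t k = s" for s k t
    using that unfolding S_def by blast
  have "small_osc_partition x e 0 (\<lambda>_. 0)"
    by (simp add: small_osc_partition_def)
  then have "0 \<in> S"
    by (intro S_intro) auto
  have bdd: "bdd_above S"
    unfolding S_def by (auto intro: bdd_aboveI[of _ 1])
  define m where "m = Sup S"
  have "0 \<le> m"
    unfolding m_def using \<open>0 \<in> S\<close> bdd by (rule cSup_upper)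
  moreover have "m \<le> 1"
  proof -
    have "S \<noteq> {}"
      using \<open>0 \<in> S\<close> by auto
    then show ?thesis
      unfolding m_def by (rule cSup_least) (simp add: S_def)
  qed
  ultimately have m01: "m \<in> {0..1}" by simp
  have "m \<in> S"
  proof (cases "m = 0")
    case True
    with \<open>0 \<in> S\<close> show ?thesis by simp
  next
    case False
    with m01 obtain b where "b < m" and extend: "\<And>k t. small_osc_partition x e k t \<Longrightarrow>
        t k \<in> {b<..<m} \<Longrightarrow> small_osc_partition x e (Suc k) (t(Suc k := m))"
      using small_osc_partition_extend_left[OF assms, of m] by auto
    then obtain s where s: "s \<in> S" "b < s"
      using less_cSup_iff[of S b] \<open>0 \<in> S\<close> bdd unfolding m_def by auto
    have "s \<le> m"
      unfolding m_def using s(1) bdd by (rule cSup_upper)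
    show ?thesis
    proof (cases "s = m")
      case True
      with s show ?thesis by simp
    next
      case False
      from s(1) obtain k t where kt: "small_osc_partition x e k t" "t k = s"
        unfolding S_def by auto
      with s(2) \<open>s \<le> m\<close> False have "small_osc_partition x e (Suc k) (t(Suc k := m))"
        by (intro extend) auto
      with m01 show ?thesis
        by (intro S_intro[where k = "Suc k" and t = "t(Suc k := m)"]) auto
    qed
  qed
  have "m = 1"
  proof (rule ccontr)
    assume "m \<noteq> 1"
    from \<open>m \<in> S\<close> obtain k t where kt: "small_osc_partition x e k t" "t k = m"
      unfolding S_def by auto
    with m01 \<open>m \<noteq> 1\<close> obtain m' where m': "m' \<in> {m<..1}"
        "small_osc_partition x e (Suc k) (t(Suc k := m'))"
      using small_osc_partition_extend_right[OF assms kt(1)] by auto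
    from m' m01 have "m' \<in> S"
      by (intro S_intro[where k = "Suc k" and t = "t(Suc k := m')"]) auto
    then have "m' \<le> m"
      unfolding m_def using bdd by (rule cSup_upper)
    with m' show False by simp
  qed
  with \<open>m \<in> S\<close> that show ?thesis
    unfolding S_def by auto
qed

lemma cadlag_bounded:
  assumes "cadlag x"
  obtains B where "\<forall>u\<in>{0..1}. \<bar>x u\<bar> \<le> B"
proof -
  obtain k t where kt: "small_osc_partition x 1 k t" "t k = 1"
    using small_osc_partition_exists[OF assms, of 1] by auto
  define B where "B = (\<Sum>i\<le>k. \<bar>x (t i)\<bar>) + 1"
  have node: "\<bar>x (t i)\<bar> \<le> B - 1" if "i \<le> k" for i
    unfolding B_def using that by (auto intro: member_le_sum)
  have "\<bar>x u\<bar> \<le> B" if "u \<in> {0..1}" for u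
  proof (cases "u = 1")
    case True
    with node[of k] kt(2) show ?thesis by simp
  next
    case False
    with that kt obtain i where i: "i < k" "t i \<le> u" "u < t (Suc i)"
      using strict_chain_locate[of k t u] unfolding small_osc_partition_def by auto
    with kt(1) have "\<bar>x u - x (t i)\<bar> < 1"
      unfolding small_osc_partition_def by auto
    with node[of i] i(1) show ?thesis by linarith
  qed
  then show ?thesis
    using that by blast
qed

definition dyadic_step :: "nat \<Rightarrow> (real \<Rightarrow> real) \<Rightarrow> bool" where
  "dyadic_step n y \<longleftrightarrow>
     (\<forall>k<(2::nat) ^ n. \<forall>t\<in>{real k / 2 ^ n..<real (k + 1) / 2 ^ n}. y t = y (real k / 2 ^ n))"

lemma finite_dyadic: "finite (dyadic n)"
proof -
  have "dyadic n = (\<lambda>k. real k / 2 ^ n) ` {..(2::nat) ^ n}"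
    unfolding dyadic_def by auto
  then show ?thesis by simp
qed

lemma dyadic_le_Max:
  assumes "d \<in> dyadic n"
  shows "\<bar>y d - x d\<bar> \<le> Max ((\<lambda>d. \<bar>y d - x d\<bar>) ` dyadic n)"
  using assms finite_dyadic[of n] by (intro Max_ge) auto

lemma dyadic_step_floor:
  assumes "dyadic_step n y" "0 \<le> v" "v < 1"
  shows "y v = y (of_int \<lfloor>v * 2 ^ n\<rfloor> / 2 ^ n)" "of_int \<lfloor>v * 2 ^ n\<rfloor> / 2 ^ n \<in> dyadic n"
proof -
  define c where "c = nat \<lfloor>v * 2 ^ n\<rfloor>"
  have c: "real c = of_int \<lfloor>v * 2 ^ n\<rfloor>"
    unfolding c_def using assms(2) by simp
  have "real c \<le> v * 2 ^ n" "v * 2 ^ n < real c + 1"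
    unfolding c using floor_correct[of "v * 2 ^ n"] by auto
  then have v: "real c / 2 ^ n \<le> v" "v < real (c + 1) / 2 ^ n"
    by (simp_all add: field_simps)
  have "v * 2 ^ n < 2 ^ n"
    using assms(3) by simp
  with \<open>real c \<le> v * 2 ^ n\<close> have "real c < 2 ^ n"
    by linarith
  then have "c < 2 ^ n"
    by simp
  with assms(1) have "\<forall>t\<in>{real c / 2 ^ n..<real (c + 1) / 2 ^ n}. y t = y (real c / 2 ^ n)"
    unfolding dyadic_step_def by blast
  with v show "y v = y (of_int \<lfloor>v * 2 ^ n\<rfloor> / 2 ^ n)"
    unfolding c[symmetric] by (meson atLeastLessThan_iff)
  from \<open>c < 2 ^ n\<close> show "of_int \<lfloor>v * 2 ^ n\<rfloor> / 2 ^ n \<in> dyadic n"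
    unfolding dyadic_def c[symmetric] by (intro CollectI exI[of _ c]) simp
qed

lemma ceiling_grid_bounds:
  fixes a P :: real
  assumes "0 < P"
  shows "a \<le> of_int \<lceil>a * P\<rceil> / P" "of_int \<lceil>a * P\<rceil> / P < a + 1 / P"
proof -
  have "a * P \<le> of_int \<lceil>a * P\<rceil>" "of_int \<lceil>a * P\<rceil> < a * P + 1"
    using ceiling_correct[of "a * P"] by linarith+
  with assms show "a \<le> of_int \<lceil>a * P\<rceil> / P" "of_int \<lceil>a * P\<rceil> / P < a + 1 / P"
    by (simp_all add: field_simps)
qed

lemma floor_grid_between:
  fixes a b v P :: real
  assumes "0 < P" "of_int \<lceil>a * P\<rceil> / P \<le> v" "v < of_int \<lceil>b * P\<rceil> / P"
  shows "a \<le> of_int \<lfloor>v * P\<rfloor> / P" "of_int \<lfloor>v * P\<rfloor> / P < b"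
proof -
  have "\<lceil>a * P\<rceil> \<le> \<lfloor>v * P\<rfloor>"
    using assms(1,2) by (simp add: le_floor_iff divide_le_eq)
  then have "a * P \<le> of_int \<lfloor>v * P\<rfloor>"
    by (simp add: ceiling_le_iff)
  with assms(1) show "a \<le> of_int \<lfloor>v * P\<rfloor> / P"
    by (simp add: le_divide_eq)
  have "\<lfloor>v * P\<rfloor> < \<lceil>b * P\<rceil>"
    using assms(1,3) by (simp add: floor_less_iff less_divide_eq)
  then have "of_int \<lfloor>v * P\<rfloor> < b * P"
    by (simp add: less_ceiling_iff)
  with assms(1) show "of_int \<lfloor>v * P\<rfloor> / P < b"
    by (simp add: divide_less_eq)
qed

section \<open>Bounds on the Skorokhod distance\<close>

lemma Lambda_maps_unit_interval: "lam \<in> Lambda \<Longrightarrow> t \<in> {0..1} \<Longrightarrow> lam t \<in> {0..1}"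
  unfolding Lambda_def homeomorphism_def by blast

lemma id_in_Lambda: "(\<lambda>t. t) \<in> Lambda"
  unfolding Lambda_def using homeomorphism_ident by (auto simp: mono_on_def)

text \<open>The bounds on \<open>x\<close> and \<open>y\<close> are needed: the supremum of a real set that is not bounded
  above is unspecified.\<close>

lemma Skorokhod_term_nonneg:
  assumes "\<forall>u\<in>{0..1}. \<bar>x u\<bar> \<le> Bx" "\<forall>u\<in>{0..1}. \<bar>y u\<bar> \<le> By" "lam \<in> Lambda"
  shows "0 \<le> (SUP t\<in>{0..1}. \<bar>lam t - t\<bar>) + (SUP t\<in>{0..1}. \<bar>y (lam t) - x t\<bar>)"
proof -
  have "bdd_above ((\<lambda>t. \<bar>lam t - t\<bar>) ` {0..1})"
    using Lambda_maps_unit_interval[OF assms(3)] by (intro bdd_aboveI2[where M = 2]) force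
  then have "\<bar>lam 0 - 0\<bar> \<le> (SUP t\<in>{0..1}. \<bar>lam t - t\<bar>)"
    by (rule cSUP_upper[rotated]) simp
  moreover have "bdd_above ((\<lambda>t. \<bar>y (lam t) - x t\<bar>) ` {0..1})"
  proof (intro bdd_aboveI2[where M = "Bx + By"])
    fix t :: real assume "t \<in> {0..1}"
    with assms Lambda_maps_unit_interval[OF assms(3) this] show "\<bar>y (lam t) - x t\<bar> \<le> Bx + By"
      by (smt (verit))
  qed
  then have "\<bar>y (lam 0) - x 0\<bar> \<le> (SUP t\<in>{0..1}. \<bar>y (lam t) - x t\<bar>)"
    by (rule cSUP_upper[rotated]) simp
  ultimately show ?thesis by linarith
qed

lemma dJ1_nonneg:
  assumes "\<forall>u\<in>{0..1}. \<bar>x u\<bar> \<le> Bx" "\<forall>u\<in>{0..1}. \<bar>y u\<bar> \<le> By"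
  shows "0 \<le> dJ1 y x"
  unfolding dJ1_def using id_in_Lambda Skorokhod_term_nonneg[OF assms]
  by (intro cINF_greatest) auto

lemma dJ1_le:
  assumes "\<forall>u\<in>{0..1}. \<bar>x u\<bar> \<le> Bx" "\<forall>u\<in>{0..1}. \<bar>y u\<bar> \<le> By"
    and "lam \<in> Lambda" "\<forall>t\<in>{0..1}. \<bar>lam t - t\<bar> \<le> a" "\<forall>t\<in>{0..1}. \<bar>y (lam t) - x t\<bar> \<le> b"
  shows "dJ1 y x \<le> a + b"
proof -
  have "bdd_below ((\<lambda>lam. (SUP t\<in>{0..1}. \<bar>lam t - t\<bar>) + (SUP t\<in>{0..1}. \<bar>y (lam t) - x t\<bar>)) ` Lambda)"
    using Skorokhod_term_nonneg[OF assms(1,2)] by (intro bdd_belowI2[where m = 0])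
  moreover have "(SUP t\<in>{0..1}. \<bar>lam t - t\<bar>) + (SUP t\<in>{0..1}. \<bar>y (lam t) - x t\<bar>) \<le> a + b"
    using assms(4,5) by (intro add_mono cSUP_least) auto
  ultimately show ?thesis
    unfolding dJ1_def by (rule cINF_lower2[OF _ assms(3)])
qed

section \<open>Piecewise linear time changes\<close>

text \<open>The piecewise linear map with \<open>t i \<mapsto> \<tau> i\<close>, written as a sum of clamped ramps so that
  continuity and monotonicity can be checked termwise.\<close>
definition interpolate :: "(nat \<Rightarrow> real) \<Rightarrow> (nat \<Rightarrow> real) \<Rightarrow> nat \<Rightarrow> real \<Rightarrow> real" where
  "interpolate t \<tau> k s =
     \<tau> 0 + (\<Sum>i<k. (\<tau> (Suc i) - \<tau> i) * max 0 (min 1 ((s - t i) / (t (Suc i) - t i))))"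

lemma interpolate_on_cell:
  assumes tc: "\<forall>i<k. t i < t (Suc i)" and j: "j < k" "t j \<le> s" "s \<le> t (Suc j)"
  shows "interpolate t \<tau> k s = \<tau> j + (\<tau> (Suc j) - \<tau> j) * ((s - t j) / (t (Suc j) - t j))"
proof -
  define g where "g i = (\<tau> (Suc i) - \<tau> i) * max 0 (min 1 ((s - t i) / (t (Suc i) - t i)))" for i
  have before: "g i = \<tau> (Suc i) - \<tau> i" if "i < j" for i
  proof -
    have "t (Suc i) \<le> s"
      using strict_chain_le[OF tc, of "Suc i" j] that j by linarith
    with tc that j have "1 \<le> (s - t i) / (t (Suc i) - t i)"
      by (simp add: le_divide_eq)
    then show ?thesis
      unfolding g_def by simp
  qed
  have after: "g i = 0" if "i \<in> {..<k} - {..<Suc j}" for i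
  proof -
    have "s \<le> t i" "t i < t (Suc i)"
      using strict_chain_le[OF tc, of "Suc j" i] tc that j by auto
    then have "(s - t i) / (t (Suc i) - t i) \<le> 0"
      by (intro divide_nonpos_pos) auto
    then show ?thesis
      unfolding g_def by simp
  qed
  have "0 \<le> (s - t j) / (t (Suc j) - t j)" "(s - t j) / (t (Suc j) - t j) \<le> 1"
    using tc j by simp_all
  then have at: "g j = (\<tau> (Suc j) - \<tau> j) * ((s - t j) / (t (Suc j) - t j))"
    unfolding g_def by simp
  have "interpolate t \<tau> k s = \<tau> 0 + sum g {..<k}"
    unfolding interpolate_def g_def ..
  also have "sum g {..<k} = sum g {..<Suc j}"
    using after j by (intro sum.mono_neutral_right) auto
  also have "\<dots> = (\<Sum>i<j. \<tau> (Suc i) - \<tau> i) + g j"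
    using before by simp
  also have "(\<Sum>i<j. \<tau> (Suc i) - \<tau> i) = \<tau> j - \<tau> 0"
    by (rule sum_lessThan_telescope)
  finally show ?thesis
    unfolding at by simp
qed

lemma interpolate_first: "interpolate t \<tau> k (t 0) = \<tau> 0" if "\<forall>i<k. t i < t (Suc i)"
proof (cases k)
  case 0
  then show ?thesis by (simp add: interpolate_def)
next
  case (Suc j)
  with that have "t 0 < t (Suc 0)"
    by auto
  with Suc show ?thesis
    using interpolate_on_cell[OF that, of 0 "t 0" \<tau>] by simp
qed

lemma interpolate_last: "interpolate t \<tau> k (t k) = \<tau> k" if "\<forall>i<k. t i < t (Suc i)"
proof (cases k)
  case 0
  then show ?thesis by (simp add: interpolate_def)
next
  case (Suc j)
  with that have "t j < t (Suc j)"
    by auto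
  with Suc show ?thesis
    using interpolate_on_cell[OF that, of j "t k" \<tau>] by simp
qed

lemma interpolate_mono:
  assumes "\<forall>i<k. t i < t (Suc i)" "\<forall>i<k. \<tau> i \<le> \<tau> (Suc i)" "s \<le> u"
  shows "interpolate t \<tau> k s \<le> interpolate t \<tau> k u"
proof -
  have "(s - t i) / (t (Suc i) - t i) \<le> (u - t i) / (t (Suc i) - t i)" if "i < k" for i
    using assms that by (intro divide_right_mono) auto
  then show ?thesis
    unfolding interpolate_def using assms(2)
    by (intro add_left_mono sum_mono mult_left_mono max.mono min.mono) auto
qed

lemma interpolate_maps_cell:
  assumes "\<forall>i<k. t i < t (Suc i)" "\<forall>i<k. \<tau> i < \<tau> (Suc i)" "j < k" "t j \<le> s" "s < t (Suc j)"
  shows "\<tau> j \<le> interpolate t \<tau> k s" "interpolate t \<tau> k s < \<tau> (Suc j)"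
proof -
  define \<theta> where "\<theta> = (s - t j) / (t (Suc j) - t j)"
  have "0 \<le> \<theta>" "\<theta> < 1"
    unfolding \<theta>_def using assms(1,3-5) by auto
  moreover have "interpolate t \<tau> k s = \<tau> j + (\<tau> (Suc j) - \<tau> j) * \<theta>"
    unfolding \<theta>_def using interpolate_on_cell[OF assms(1,3,4)] assms(5) by simp
  moreover have "0 < \<tau> (Suc j) - \<tau> j"
    using assms(2,3) by simp
  ultimately have "0 \<le> (\<tau> (Suc j) - \<tau> j) * \<theta>" "(\<tau> (Suc j) - \<tau> j) * \<theta> < \<tau> (Suc j) - \<tau> j"
    by simp_all
  with \<open>interpolate t \<tau> k s = \<tau> j + (\<tau> (Suc j) - \<tau> j) * \<theta>\<close>
  show "\<tau> j \<le> interpolate t \<tau> k s" "interpolate t \<tau> k s < \<tau> (Suc j)"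
    by linarith+
qed

lemma interpolate_strict_mono:
  assumes tc: "\<forall>i<k. t i < t (Suc i)" and \<tau>c: "\<forall>i<k. \<tau> i < \<tau> (Suc i)"
    and "t 0 \<le> s" "s < t k" "s < u"
  shows "interpolate t \<tau> k s < interpolate t \<tau> k u"
proof -
  obtain j where j: "j < k" "t j \<le> s" "s < t (Suc j)"
    using strict_chain_locate[OF tc] assms(3,4) by blast
  show ?thesis
  proof (cases "u < t (Suc j)")
    case True
    have "(s - t j) / (t (Suc j) - t j) < (u - t j) / (t (Suc j) - t j)"
      using tc j \<open>s < u\<close> by (intro divide_strict_right_mono) auto
    then have "(\<tau> (Suc j) - \<tau> j) * ((s - t j) / (t (Suc j) - t j))
        < (\<tau> (Suc j) - \<tau> j) * ((u - t j) / (t (Suc j) - t j))"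
      using \<tau>c j(1) by (intro mult_strict_left_mono) auto
    with j True \<open>s < u\<close> show ?thesis
      using interpolate_on_cell[OF tc j(1,2), of \<tau>] interpolate_on_cell[OF tc j(1), of u \<tau>]
      by simp
  next
    case False
    have "interpolate t \<tau> k s < \<tau> (Suc j)"
      using interpolate_maps_cell[OF tc \<tau>c j] by simp
    also have "\<dots> = interpolate t \<tau> k (t (Suc j))"
      using interpolate_on_cell[OF tc j(1), of "t (Suc j)"] j tc by simp
    also have "\<dots> \<le> interpolate t \<tau> k u"
      using False tc \<tau>c by (intro interpolate_mono) (auto intro: less_imp_le)
    finally show ?thesis .
  qed
qed

lemma interpolate_in_Lambda:
  assumes tc: "\<forall>i<k. t i < t (Suc i)" and \<tau>c: "\<forall>i<k. \<tau> i < \<tau> (Suc i)"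
    and "t 0 = 0" "\<tau> 0 = 0" "t k = 1" "\<tau> k = 1"
  shows "interpolate t \<tau> k \<in> Lambda"
proof -
  define lam where "lam = interpolate t \<tau> k"
  have \<tau>c': "\<forall>i<k. \<tau> i \<le> \<tau> (Suc i)"
    using \<tau>c by (auto intro: less_imp_le)
  have lam01: "lam 0 = 0" "lam 1 = 1"
    unfolding lam_def using interpolate_first[OF tc] interpolate_last[OF tc] assms(3-6) by simp_all
  have mono: "mono_on {0..1} lam"
    unfolding lam_def using tc \<tau>c' by (auto intro: mono_onI interpolate_mono)
  have "inj_on lam {0..1}"
  proof (rule inj_onI)
    fix s u assume "s \<in> {0..1}" "u \<in> {0..1}" "lam s = lam u"
    then show "s = u"
      using interpolate_strict_mono[OF tc \<tau>c, of s u] interpolate_strict_mono[OF tc \<tau>c, of u s]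
        assms(3,5) unfolding lam_def by (cases s u rule: linorder_cases) auto
  qed
  moreover have cont: "continuous_on {0..1} lam"
  proof -
    have "\<forall>i\<in>{..<k}. t (Suc i) - t i \<noteq> 0"
      using tc by force
    then show ?thesis
      unfolding lam_def interpolate_def by (intro continuous_intros) auto
  qed
  moreover have "lam ` {0..1} = {0..1}"
  proof
    show "lam ` {0..1} \<subseteq> {0..1}"
    proof (rule image_subsetI)
      fix v :: real assume "v \<in> {0..1}"
      then show "lam v \<in> {0..1}"
        using mono_onD[OF mono, of 0 v] mono_onD[OF mono, of v 1] lam01 by auto
    qed
    show "{0..1} \<subseteq> lam ` {0..1}"
      using IVT'[of lam 0 _ 1] lam01 cont by fastforce
  qed
  ultimately obtain mu where "homeomorphism {0..1} {0..1} lam mu"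
    using homeomorphism_compact[OF compact_Icc] by metis
  with mono show ?thesis
    unfolding Lambda_def lam_def by blast
qed

lemma interpolate_close_to_id:
  assumes tc: "\<forall>i<k. t i < t (Suc i)" and close: "\<forall>i\<le>k. t i \<le> \<tau> i \<and> \<tau> i \<le> t i + \<delta>"
    and "t 0 \<le> s" "s \<le> t k"
  shows "\<bar>interpolate t \<tau> k s - s\<bar> \<le> \<delta>"
proof (cases "s = t k")
  case True
  then show ?thesis
    using interpolate_last[OF tc] close by auto
next
  case False
  with assms(3,4) obtain j where j: "j < k" "t j \<le> s" "s < t (Suc j)"
    using strict_chain_locate[OF tc] by fastforce
  define \<theta> where "\<theta> = (s - t j) / (t (Suc j) - t j)"
  have \<theta>: "0 \<le> \<theta>" "\<theta> \<le> 1"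
    unfolding \<theta>_def using tc j by auto
  have ss: "s = t j + (t (Suc j) - t j) * \<theta>"
    unfolding \<theta>_def using tc j by simp
  have "interpolate t \<tau> k s = \<tau> j + (\<tau> (Suc j) - \<tau> j) * \<theta>"
    unfolding \<theta>_def using interpolate_on_cell[OF tc j(1,2)] j(3) by simp
  then have "interpolate t \<tau> k s - s = (1 - \<theta>) * (\<tau> j - t j) + \<theta> * (\<tau> (Suc j) - t (Suc j))"
    by (subst ss) (simp add: algebra_simps)
  moreover have "0 \<le> \<tau> j - t j" "\<tau> j - t j \<le> \<delta>" "0 \<le> \<tau> (Suc j) - t (Suc j)" "\<tau> (Suc j) - t (Suc j) \<le> \<delta>"
    using close j(1) by (auto dest: spec[of _ j] spec[of _ "Suc j"])
  ultimately show ?thesis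
    using \<theta> convex_bound_le[of "\<tau> j - t j" \<delta> "\<tau> (Suc j) - t (Suc j)" "1 - \<theta>" \<theta>]
      mult_nonneg_nonneg[of "1 - \<theta>" "\<tau> j - t j"] mult_nonneg_nonneg[of \<theta> "\<tau> (Suc j) - t (Suc j)"]
    by simp
qed

lemma dyadic_step_cell_estimate:
  assumes "dyadic_step n y" "\<forall>u\<in>{a..<b}. \<bar>x u - x a\<bar> < e" "s \<in> {a..<b}"
    and "of_int \<lceil>a * 2 ^ n\<rceil> / 2 ^ n \<le> v" "v < of_int \<lceil>b * 2 ^ n\<rceil> / 2 ^ n" "0 \<le> v" "v < 1"
  shows "\<bar>y v - x s\<bar> \<le> 2 * e + Max ((\<lambda>d. \<bar>y d - x d\<bar>) ` dyadic n)"
proof -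
  define d where "d = of_int \<lfloor>v * 2 ^ n\<rfloor> / (2 ^ n :: real)"
  have "d \<in> {a..<b}"
    unfolding d_def using floor_grid_between[of "2 ^ n" a v b] assms(4,5) by simp
  with assms(2,3) have "\<bar>x d - x a\<bar> < e" "\<bar>x s - x a\<bar> < e"
    by auto
  moreover have "y v = y d" "d \<in> dyadic n"
    unfolding d_def using dyadic_step_floor[OF assms(1,6,7)] by auto
  ultimately show ?thesis
    using dyadic_le_Max[of d n y x] by simp
qed

lemma dJ1_dyadic_step_le:
  fixes x y :: "real \<Rightarrow> real"
  assumes "cadlag x" "cadlag y" "dyadic_step n y"
    and part: "small_osc_partition x e k t" "t k = 1"
    and fine: "\<forall>i<k. 1 / 2 ^ n < t (Suc i) - t i"
  shows "dJ1 y x \<le> 1 / 2 ^ n + (2 * e + Max ((\<lambda>d. \<bar>y d - x d\<bar>) ` dyadic n))"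
proof -
  define P :: real where "P = 2 ^ n"
  define \<tau> where "\<tau> i = of_int \<lceil>t i * P\<rceil> / P" for i
  define lam where "lam = interpolate t \<tau> k"
  have "0 < P"
    unfolding P_def by simp
  from part have tc: "\<forall>i<k. t i < t (Suc i)" and "t 0 = 0"
    and osc: "\<forall>i<k. \<forall>u\<in>{t i..<t (Suc i)}. \<bar>x u - x (t i)\<bar> < e"
    unfolding small_osc_partition_def by auto
  have close: "\<forall>i\<le>k. t i \<le> \<tau> i \<and> \<tau> i \<le> t i + 1 / P"
    unfolding \<tau>_def using ceiling_grid_bounds[OF \<open>0 < P\<close>] by (auto intro: less_imp_le)
  have \<tau>c: "\<forall>i<k. \<tau> i < \<tau> (Suc i)"
  proof (intro allI impI)
    fix i assume "i < k"
    with close fine have "\<tau> i \<le> t i + 1 / P" "t i + 1 / P < t (Suc i)" "t (Suc i) \<le> \<tau> (Suc i)"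
      unfolding P_def by auto
    then show "\<tau> i < \<tau> (Suc i)" by linarith
  qed
  have "\<lceil>P\<rceil> = 2 ^ n"
    unfolding P_def by (metis ceiling_of_int of_int_numeral of_int_power)
  then have "\<tau> 0 = 0" "\<tau> k = 1"
    unfolding \<tau>_def using \<open>t 0 = 0\<close> \<open>t k = 1\<close> by (simp_all add: P_def)
  then have lam: "lam \<in> Lambda"
    unfolding lam_def using interpolate_in_Lambda[OF tc \<tau>c \<open>t 0 = 0\<close> _ \<open>t k = 1\<close>] by simp
  have "\<forall>s\<in>{0..1}. \<bar>lam s - s\<bar> \<le> 1 / P"
    unfolding lam_def using interpolate_close_to_id[OF tc close] \<open>t 0 = 0\<close> \<open>t k = 1\<close> by simp
  moreover have "\<forall>s\<in>{0..1}. \<bar>y (lam s) - x s\<bar> \<le> 2 * e + Max ((\<lambda>d. \<bar>y d - x d\<bar>) ` dyadic n)"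
  proof
    fix s :: real assume s: "s \<in> {0..1}"
    show "\<bar>y (lam s) - x s\<bar> \<le> 2 * e + Max ((\<lambda>d. \<bar>y d - x d\<bar>) ` dyadic n)"
    proof (cases "s = 1")
      case True
      have "k \<noteq> 0"
        using \<open>t 0 = 0\<close> \<open>t k = 1\<close> by (cases k) auto
      with osc tc have "\<bar>x (t 0) - x (t 0)\<bar> < e"
        by (metis atLeastLessThan_iff gr0I order.refl)
      moreover have "1 \<in> dyadic n"
        unfolding dyadic_def by (intro CollectI exI[of _ "2 ^ n"]) simp
      moreover have "lam 1 = 1"
        unfolding lam_def using interpolate_last[OF tc] \<open>t k = 1\<close> \<open>\<tau> k = 1\<close> by simp
      ultimately show ?thesis
        using True dyadic_le_Max[of 1 n y x] by simp
    next
      case False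
      with s obtain j where j: "j < k" "t j \<le> s" "s < t (Suc j)"
        using strict_chain_locate[OF tc] \<open>t 0 = 0\<close> \<open>t k = 1\<close> by fastforce
      have lam_s: "\<tau> j \<le> lam s" "lam s < \<tau> (Suc j)"
        unfolding lam_def using interpolate_maps_cell[OF tc \<tau>c j] by auto
      have "\<tau> (Suc j) \<le> 1"
        using strict_chain_le[OF \<tau>c, of "Suc j" k] j(1) \<open>\<tau> k = 1\<close> by simp
      with lam_s have "lam s < 1"
        by linarith
      moreover have "0 \<le> lam s"
        using Lambda_maps_unit_interval[OF lam s] by simp
      ultimately show ?thesis
        using osc j by (intro dyadic_step_cell_estimate[OF assms(3) _ _ lam_s[unfolded \<tau>_def P_def]]) auto
    qed
  qed
  moreover obtain Bx By where "\<forall>u\<in>{0..1}. \<bar>x u\<bar> \<le> Bx" "\<forall>u\<in>{0..1}. \<bar>y u\<bar> \<le> By"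
    using cadlag_bounded[OF assms(1)] cadlag_bounded[OF assms(2)] by metis
  ultimately show ?thesis
    using dJ1_le[OF _ _ lam] unfolding P_def by blast
qed

lemma dJ1_tendsto_zero_if_dyadic_tendsto_zero:
  fixes x :: "real \<Rightarrow> real" and y :: "nat \<Rightarrow> real \<Rightarrow> real"
  assumes "cadlag x" "\<forall>n\<ge>1. cadlag (y n) \<and> dyadic_step n (y n)"
    and "(\<lambda>n. Max ((\<lambda>d. \<bar>y n d - x d\<bar>) ` dyadic n)) \<longlonglongrightarrow> 0"
  shows "(\<lambda>n. dJ1 (y n) x) \<longlonglongrightarrow> 0"
proof (rule tendstoI)
  fix e :: real assume "0 < e"
  then obtain k t where part: "small_osc_partition x (e / 4) k t" "t k = 1"
    using small_osc_partition_exists[OF assms(1), of "e / 4"] by auto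
  obtain Bx where Bx: "\<forall>u\<in>{0..1}. \<bar>x u\<bar> \<le> Bx"
    using cadlag_bounded[OF assms(1)] by blast
  have grid: "(\<lambda>n. 1 / 2 ^ n :: real) \<longlonglongrightarrow> 0"
    by (rule LIMSEQ_divide_realpow_zero) simp
  have "\<forall>i\<in>{..<k}. eventually (\<lambda>n. 1 / 2 ^ n < t (Suc i) - t i) sequentially"
    using part(1) unfolding small_osc_partition_def by (auto intro: order_tendstoD(2)[OF grid])
  then have "eventually (\<lambda>n. \<forall>i\<in>{..<k}. 1 / 2 ^ n < t (Suc i) - t i) sequentially"
    by (intro eventually_ball_finite) auto
  moreover have "eventually (\<lambda>n. 1 / 2 ^ n < e / 4) sequentially"
    using order_tendstoD(2)[OF grid, of "e / 4"] \<open>0 < e\<close> by simp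
  moreover have "eventually (\<lambda>n. Max ((\<lambda>d. \<bar>y n d - x d\<bar>) ` dyadic n) < e / 4) sequentially"
    using order_tendstoD(2)[OF assms(3), of "e / 4"] \<open>0 < e\<close> by simp
  moreover have "eventually (\<lambda>n. 1 \<le> n) sequentially"
    by (rule eventually_ge_at_top)
  ultimately show "eventually (\<lambda>n. dist (dJ1 (y n) x) 0 < e) sequentially"
  proof eventually_elim
    case (elim n)
    with assms(2) have "cadlag (y n)" "dyadic_step n (y n)"
      by auto
    then obtain By where By: "\<forall>u\<in>{0..1}. \<bar>y n u\<bar> \<le> By"
      using cadlag_bounded by blast
    have "dJ1 (y n) x \<le> 1 / 2 ^ n + (2 * (e / 4) + Max ((\<lambda>d. \<bar>y n d - x d\<bar>) ` dyadic n))"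
      using dJ1_dyadic_step_le[OF assms(1) \<open>cadlag (y n)\<close> \<open>dyadic_step n (y n)\<close> part] elim(1)
      by blast
    moreover have "0 \<le> dJ1 (y n) x"
      by (rule dJ1_nonneg[OF Bx By])
    ultimately show ?case
      using elim(2,3) by (simp add: dist_real_def)
  qed
qed

theorem mainTheorem7:
  fixes M :: "'a measure" and X :: "'a \<Rightarrow> real \<Rightarrow> real"
    and Xn :: "nat \<Rightarrow> 'a \<Rightarrow> real \<Rightarrow> real"
  assumes "prob_space M"
    and "\<forall>t\<in>{0..1}. (\<lambda>\<omega>. X \<omega> t) \<in> borel_measurable M"
    and "\<forall>n\<ge>1. \<forall>t\<in>{0..1}. (\<lambda>\<omega>. Xn n \<omega> t) \<in> borel_measurable M"
    and "\<forall>\<omega>\<in>space M. cadlag (X \<omega>)"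
    and "\<forall>n\<ge>1. \<forall>\<omega>\<in>space M. cadlag (Xn n \<omega>)"
    and "\<forall>n\<ge>1. \<forall>\<omega>\<in>space M. \<forall>k<(2::nat) ^ n. \<forall>t\<in>{real k / 2 ^ n..<real (k + 1) / 2 ^ n}.
           Xn n \<omega> t = Xn n \<omega> (real k / 2 ^ n)"
    and "AE \<omega> in M. (\<lambda>n. Max ((\<lambda>d. \<bar>Xn n \<omega> d - X \<omega> d\<bar>) ` dyadic n)) \<longlonglongrightarrow> 0"
  shows "AE \<omega> in M. (\<lambda>n. dJ1 (Xn n \<omega>) (X \<omega>)) \<longlonglongrightarrow> 0"
  using assms(7) AE_space
proof eventually_elim
  case (elim \<omega>)
  have "cadlag (X \<omega>)"
    using assms(4) elim(2) by blast
  moreover have "\<forall>n\<ge>1. cadlag (Xn n \<omega>) \<and> dyadic_step n (Xn n \<omega>)"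
    using assms(5,6) elim(2) unfolding dyadic_step_def by blast
  ultimately show ?case
    using elim(1) by (rule dJ1_tendsto_zero_if_dyadic_tendsto_zero)
qed

end
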